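(* For integers $1\le\alpha\le\beta\le 2n$ let $A_{\alpha,\beta}$ be the number of arcs of $CP_n$ (of either color) joining points $i$ and $i+k$ for some $i$ and some $k$ with $\alpha\le k\le\beta$. Then, uniformly in $\alpha,\beta$, $$\mathbb{E}[A_{\alpha,\beta}]=O\big(\alpha^{-1/2}n+\beta n e^{-\alpha/16}\big).$$ In particular, if $32\log n\le\alpha$ then $\mathbb{E}[A_{\alpha,\beta}]=O(\alpha^{-1/2}n)$.
   Context: The random Catalan-pair graph $CP_n$: points $1,\dots,2n$ on a line; each of $1,\dots,2n-1$ is colored red/blue independently and uniformly, and $2n$ is colored so that the number of red points is even; then a uniformly random non-crossing perfect matching (Catalan-arc matching: no $a<b<c<d$ with $\{a,c\},\{b,d\}$ both arcs) is placed independently on the red points and on the blue points; the vertices of $CP_n$ are the $n$ arcs, two adjacent iff their endpoints alternate. *)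

theory Defs
  imports "HOL-Probability.Probability"
begin

definition perfect_matching_on :: "nat set \<Rightarrow> (nat \<times> nat) set \<Rightarrow> bool" where
  "perfect_matching_on S M \<longleftrightarrow>
     (\<forall>(a,b)\<in>M. a < b \<and> a \<in> S \<and> b \<in> S) \<and>
     (\<forall>x\<in>S. \<exists>!p\<in>M. x = fst p \<or> x = snd p)"

definition noncrossing :: "(nat \<times> nat) set \<Rightarrow> bool" where
  "noncrossing M \<longleftrightarrow>
     \<not> (\<exists>a b c d. a < b \<and> b < c \<and> c < d \<and> (a,c) \<in> M \<and> (b,d) \<in> M)"

definition nc_matchings :: "nat set \<Rightarrow> (nat \<times> nat) set set" where
  "nc_matchings S = {M. perfect_matching_on S M \<and> noncrossing M}"

text \<open>Red points: points 1..2n-1 coloured uniformly at random (R0 = the red ones among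
them); point 2n is red iff this makes the number of red points even.\<close>

definition red_set :: "nat \<Rightarrow> nat set \<Rightarrow> nat set" where
  "red_set n R0 = R0 \<union> (if odd (card R0) then {2*n} else {})"

text \<open>The random Catalan-pair graph CP_n, represented by its set of arcs
(the vertices of CP_n); the union of the red and blue matchings.\<close>

definition CP :: "nat \<Rightarrow> (nat \<times> nat) set pmf" where
  "CP n = do {
     R0 \<leftarrow> pmf_of_set (Pow {1..2*n-1});
     let R = red_set n R0;
     let B = {1..2*n} - R;
     MR \<leftarrow> pmf_of_set (nc_matchings R);
     MB \<leftarrow> pmf_of_set (nc_matchings B);
     return_pmf (MR \<union> MB)
   }"

definition A_count :: "nat \<Rightarrow> nat \<Rightarrow> (nat \<times> nat) set \<Rightarrow> real" where
  "A_count \<alpha> \<beta> M = real (card {(i,j)\<in>M. \<alpha> \<le> j - i \<and> j - i \<le> \<beta>})"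

end

theory Submission
  imports Defs "HOL-Computational_Algebra.Formal_Power_Series"
begin

text \<open>A uniform non-crossing matching of a point set contains a given arc with probability
  \<open>catalan a * catalan b / catalan (a + b + 1)\<close>, where \<open>2a\<close> and \<open>2b\<close> points lie inside and
  outside the arc; by the central binomial estimates this is \<open>O((2a + 1) powr (-3/2) + (2b + 1) powr (-3/2))\<close>.
  In \<open>CP n\<close> the red points inside (outside) an arc include the red points of \<open>{1..2n-1}\<close> there, and
  these form a uniformly random subset; averaging over it turns the inside count into a binomial
  variable and costs only a constant factor.\<close>

section \<open>Non-crossing perfect matchings\<close>

lemma perfect_matching_on_arcD:
  "perfect_matching_on S M \<Longrightarrow> (a, b) \<in> M \<Longrightarrow> a < b \<and> a \<in> S \<and> b \<in> S"
  unfolding perfect_matching_on_def by blast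

lemma perfect_matching_on_unique:
  "perfect_matching_on S M \<Longrightarrow> x \<in> S \<Longrightarrow> p \<in> M \<Longrightarrow> q \<in> M \<Longrightarrow>
   x = fst p \<or> x = snd p \<Longrightarrow> x = fst q \<or> x = snd q \<Longrightarrow> p = q"
  unfolding perfect_matching_on_def by metis

lemma perfect_matching_on_covers:
  "perfect_matching_on S M \<Longrightarrow> x \<in> S \<Longrightarrow> \<exists>p\<in>M. x = fst p \<or> x = snd p"
  unfolding perfect_matching_on_def by metis

lemma perfect_matching_onI:
  assumes "\<And>a b. (a, b) \<in> M \<Longrightarrow> a < b \<and> a \<in> S \<and> b \<in> S"
    and "\<And>x. x \<in> S \<Longrightarrow> \<exists>p\<in>M. x = fst p \<or> x = snd p"
    and "\<And>x p q. x \<in> S \<Longrightarrow> p \<in> M \<Longrightarrow> q \<in> M \<Longrightarrow>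
           x = fst p \<or> x = snd p \<Longrightarrow> x = fst q \<or> x = snd q \<Longrightarrow> p = q"
  shows "perfect_matching_on S M"
  unfolding perfect_matching_on_def
proof (intro conjI ballI)
  show "\<And>p. p \<in> M \<Longrightarrow> case p of (a, b) \<Rightarrow> a < b \<and> a \<in> S \<and> b \<in> S"
    using assms(1) by auto
  fix x assume x: "x \<in> S"
  then obtain p where "p \<in> M" "x = fst p \<or> x = snd p" using assms(2) by blast
  then show "\<exists>!p\<in>M. x = fst p \<or> x = snd p" using assms(3)[OF x] by (intro ex1I[of _ p]) blast+
qed

lemma perfect_matching_on_Un:
  assumes pm1: "perfect_matching_on S1 M1" and pm2: "perfect_matching_on S2 M2"
    and disj: "S1 \<inter> S2 = {}"
  shows "perfect_matching_on (S1 \<union> S2) (M1 \<union> M2)"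
proof (rule perfect_matching_onI)
  have ends1: "fst p \<in> S1 \<and> snd p \<in> S1" if "p \<in> M1" for p
    using perfect_matching_on_arcD[OF pm1, of "fst p" "snd p"] that by simp
  have ends2: "fst p \<in> S2 \<and> snd p \<in> S2" if "p \<in> M2" for p
    using perfect_matching_on_arcD[OF pm2, of "fst p" "snd p"] that by simp
  show "a < b \<and> a \<in> S1 \<union> S2 \<and> b \<in> S1 \<union> S2" if "(a, b) \<in> M1 \<union> M2" for a b
    using that perfect_matching_on_arcD[OF pm1] perfect_matching_on_arcD[OF pm2] by blast
  show "\<exists>p\<in>M1 \<union> M2. x = fst p \<or> x = snd p" if "x \<in> S1 \<union> S2" for x
    using that perfect_matching_on_covers[OF pm1] perfect_matching_on_covers[OF pm2] by blast
  show "p = q" if "x \<in> S1 \<union> S2" "p \<in> M1 \<union> M2" "q \<in> M1 \<union> M2"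
    "x = fst p \<or> x = snd p" "x = fst q \<or> x = snd q" for x p q
  proof (cases "x \<in> S1")
    case True
    then have "p \<notin> M2" "q \<notin> M2" using that(4,5) ends2[of p] ends2[of q] True disj by auto
    then have "p \<in> M1" "q \<in> M1" using that(2,3) by auto
    then show ?thesis using perfect_matching_on_unique[OF pm1 True] that by blast
  next
    case False
    then have "p \<notin> M1" "q \<notin> M1" using that(4,5) ends1[of p] ends1[of q] False by auto
    then have "p \<in> M2" "q \<in> M2" using that(2,3) by auto
    then show ?thesis using perfect_matching_on_unique[OF pm2] False that by blast
  qed
qed

lemma perfect_matching_on_single_arc: "i < j \<Longrightarrow> perfect_matching_on {i, j} {(i, j)}"
  unfolding perfect_matching_on_def by auto

lemma nc_matchings_subset: "M \<in> nc_matchings S \<Longrightarrow> M \<subseteq> S \<times> S"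
  unfolding nc_matchings_def using perfect_matching_on_arcD by fastforce

lemma finite_nc_matchings: "finite S \<Longrightarrow> finite (nc_matchings S)"
  by (rule finite_subset[of _ "Pow (S \<times> S)"]) (auto dest: nc_matchings_subset)

lemma nc_matchings_empty: "nc_matchings {} = {{}}"
  unfolding nc_matchings_def perfect_matching_on_def noncrossing_def by auto

definition points_between :: "nat set \<Rightarrow> nat \<Rightarrow> nat \<Rightarrow> nat set" where
  "points_between S i j = {x\<in>S. i < x \<and> x < j}"

definition points_outside :: "nat set \<Rightarrow> nat \<Rightarrow> nat \<Rightarrow> nat set" where
  "points_outside S i j = {x\<in>S. x < i \<or> j < x}"

lemma finite_points_between_outside:
  "finite S \<Longrightarrow> finite (points_between S i j)"
  "finite S \<Longrightarrow> finite (points_outside S i j)"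
  unfolding points_between_def points_outside_def by auto

lemma points_between_outside_mono:
  "T \<subseteq> S \<Longrightarrow> points_between T i j \<subseteq> points_between S i j"
  "T \<subseteq> S \<Longrightarrow> points_outside T i j \<subseteq> points_outside S i j"
  unfolding points_between_def points_outside_def by auto

lemma card_points_between_outside:
  assumes "finite S" "i \<in> S" "j \<in> S" "i < j"
  shows "card S = card (points_between S i j) + card (points_outside S i j) + 2"
proof -
  have "S = {i} \<union> {j} \<union> points_between S i j \<union> points_outside S i j"
    using assms unfolding points_between_def points_outside_def by auto
  moreover have "card ({i} \<union> {j} \<union> points_between S i j \<union> points_outside S i j)
      = card (points_between S i j) + card (points_outside S i j) + 2"
    using assms
    by (subst card_Un_disjoint, (auto simp: points_between_def points_outside_def)[3])+ auto
  ultimately show ?thesis by simp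
qed

lemma nc_matching_arc_nested_or_disjoint:
  assumes M: "M \<in> nc_matchings S" and ij: "(i, j) \<in> M" and ab: "(a, b) \<in> M" "(a, b) \<noteq> (i, j)"
  shows "a \<in> points_between S i j \<and> b \<in> points_between S i j \<or>
         a \<in> points_outside S i j \<and> b \<in> points_outside S i j"
proof -
  have pm: "perfect_matching_on S M" and nc: "noncrossing M"
    using M unfolding nc_matchings_def by auto
  have "a < b" "a \<in> S" "b \<in> S" "i < j" "i \<in> S" "j \<in> S"
    using perfect_matching_on_arcD[OF pm ab(1)] perfect_matching_on_arcD[OF pm ij] by auto
  moreover have "a \<noteq> i" "b \<noteq> i"
    using perfect_matching_on_unique[OF pm \<open>i \<in> S\<close> ab(1) ij] ab(2) by auto
  moreover have "a \<noteq> j" "b \<noteq> j"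
    using perfect_matching_on_unique[OF pm \<open>j \<in> S\<close> ab(1) ij] ab(2) by auto
  moreover have "\<not> (i < a \<and> a < j \<and> j < b)" "\<not> (a < i \<and> i < b \<and> b < j)"
    using nc ij ab unfolding noncrossing_def by blast+
  ultimately show ?thesis unfolding points_between_def points_outside_def by auto
qed

lemma nc_matching_restrict:
  assumes M: "M \<in> nc_matchings S" and "T \<subseteq> S"
    and closed: "\<And>x p. x \<in> T \<Longrightarrow> p \<in> M \<Longrightarrow> x = fst p \<or> x = snd p \<Longrightarrow> p \<in> T \<times> T"
  shows "M \<inter> (T \<times> T) \<in> nc_matchings T"
proof -
  have pm: "perfect_matching_on S M" and nc: "noncrossing M"
    using M unfolding nc_matchings_def by auto
  have "\<exists>!p\<in>M \<inter> (T \<times> T). x = fst p \<or> x = snd p" if x: "x \<in> T" for x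
  proof -
    obtain p where "p \<in> M" "x = fst p \<or> x = snd p"
      using perfect_matching_on_covers[OF pm] x \<open>T \<subseteq> S\<close> by blast
    then show ?thesis
      using closed[OF x] perfect_matching_on_unique[OF pm, of x] x \<open>T \<subseteq> S\<close> by blast
  qed
  moreover have "noncrossing (M \<inter> (T \<times> T))"
    using nc unfolding noncrossing_def by blast
  ultimately show ?thesis
    using perfect_matching_on_arcD[OF pm]
    unfolding nc_matchings_def perfect_matching_on_def by blast
qed

lemma nc_matching_insert_arc:
  assumes ij: "i \<in> S" "j \<in> S" "i < j"
    and A: "A \<in> nc_matchings (points_between S i j)"
    and B: "B \<in> nc_matchings (points_outside S i j)"
  shows "insert (i, j) (A \<union> B) \<in> nc_matchings S"
proof -
  let ?I = "points_between S i j" and ?O = "points_outside S i j"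
  have pmA: "perfect_matching_on ?I A" and ncA: "noncrossing A"
    and pmB: "perfect_matching_on ?O B" and ncB: "noncrossing B"
    using A B unfolding nc_matchings_def by auto
  have S: "({i, j} \<union> ?I) \<union> ?O = S"
    using ij unfolding points_between_def points_outside_def by auto
  have "perfect_matching_on (({i, j} \<union> ?I) \<union> ?O) (({(i, j)} \<union> A) \<union> B)"
    using \<open>i < j\<close>
    by (intro perfect_matching_on_Un perfect_matching_on_single_arc pmA pmB)
       (auto simp: points_between_def points_outside_def)
  then have "perfect_matching_on S (insert (i, j) (A \<union> B))"
    using S by (metis Un_assoc insert_is_Un)
  moreover have "noncrossing (insert (i, j) (A \<union> B))"
    unfolding noncrossing_def
  proof (intro notI, elim exE conjE)
    fix a b c d assume o: "a < b" "b < c" "c < d"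
      and ac: "(a, c) \<in> insert (i, j) (A \<union> B)" and bd: "(b, d) \<in> insert (i, j) (A \<union> B)"
    have "\<not> ((a, c) \<in> A \<and> (b, d) \<in> A)" "\<not> ((a, c) \<in> B \<and> (b, d) \<in> B)"
      using ncA ncB o unfolding noncrossing_def by (meson, meson)
    moreover have "a \<in> ?I \<and> c \<in> ?I" if "(a, c) \<in> A"
      using perfect_matching_on_arcD[OF pmA that] by simp
    moreover have "b \<in> ?I \<and> d \<in> ?I" if "(b, d) \<in> A"
      using perfect_matching_on_arcD[OF pmA that] by simp
    moreover have "a \<in> ?O \<and> c \<in> ?O" if "(a, c) \<in> B"
      using perfect_matching_on_arcD[OF pmB that] by simp
    moreover have "b \<in> ?O \<and> d \<in> ?O" if "(b, d) \<in> B"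
      using perfect_matching_on_arcD[OF pmB that] by simp
    ultimately show False
      using ac bd o unfolding points_between_def points_outside_def by auto
  qed
  ultimately show ?thesis unfolding nc_matchings_def by simp
qed

lemma nc_matching_restrict_at_arc:
  assumes M: "M \<in> nc_matchings S" "(i, j) \<in> M"
  shows "M \<inter> (points_between S i j \<times> points_between S i j) \<in> nc_matchings (points_between S i j)"
    and "M \<inter> (points_outside S i j \<times> points_outside S i j) \<in> nc_matchings (points_outside S i j)"
proof -
  let ?I = "points_between S i j" and ?O = "points_outside S i j"
  have "i < j" using M nc_matchings_def perfect_matching_on_arcD by blast
  then have disjoint: "?I \<inter> ?O = {}" "i \<notin> ?I \<union> ?O" "j \<notin> ?I \<union> ?O"
    unfolding points_between_def points_outside_def by auto
  have sides: "p \<in> ?I \<times> ?I \<or> p \<in> ?O \<times> ?O"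
    if "p \<in> M" "x \<in> ?I \<union> ?O" "x = fst p \<or> x = snd p" for p x
  proof -
    have "p \<noteq> (i, j)" using that disjoint by auto
    then show ?thesis
      using nc_matching_arc_nested_or_disjoint[OF M, of "fst p" "snd p"] that(1)
        by (auto simp: mem_Times_iff)
  qed
  show "M \<inter> (?I \<times> ?I) \<in> nc_matchings ?I"
  proof (rule nc_matching_restrict[OF M(1)])
    show "p \<in> ?I \<times> ?I" if "x \<in> ?I" "p \<in> M" "x = fst p \<or> x = snd p" for x p
      using sides[of p x] that disjoint(1) by (auto simp: mem_Times_iff)
  qed (auto simp: points_between_def)
  show "M \<inter> (?O \<times> ?O) \<in> nc_matchings ?O"
  proof (rule nc_matching_restrict[OF M(1)])
    show "p \<in> ?O \<times> ?O" if "x \<in> ?O" "p \<in> M" "x = fst p \<or> x = snd p" for x p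
      using sides[of p x] that disjoint(1) by (auto simp: mem_Times_iff)
  qed (auto simp: points_outside_def)
qed

lemma bij_betw_nc_matchings_split_at_arc:
  assumes "i \<in> S" "j \<in> S" "i < j"
  shows "bij_betw (\<lambda>M. (M \<inter> (points_between S i j \<times> points_between S i j),
                         M \<inter> (points_outside S i j \<times> points_outside S i j)))
           {M\<in>nc_matchings S. (i, j) \<in> M}
           (nc_matchings (points_between S i j) \<times> nc_matchings (points_outside S i j))"
proof (rule bij_betw_byWitness[where f' = "\<lambda>(A, B). insert (i, j) (A \<union> B)"])
  let ?I = "points_between S i j" and ?O = "points_outside S i j"
  have disjoint: "?I \<inter> ?O = {}" "i \<notin> ?I" "i \<notin> ?O"
    using \<open>i < j\<close> unfolding points_between_def points_outside_def by auto
  show "\<forall>M\<in>{M\<in>nc_matchings S. (i, j) \<in> M}.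
      (\<lambda>(A, B). insert (i, j) (A \<union> B)) (M \<inter> (?I \<times> ?I), M \<inter> (?O \<times> ?O)) = M"
    using nc_matching_arc_nested_or_disjoint by fastforce
  show "\<forall>AB\<in>nc_matchings ?I \<times> nc_matchings ?O.
      (\<lambda>M. (M \<inter> (?I \<times> ?I), M \<inter> (?O \<times> ?O))) ((\<lambda>(A, B). insert (i, j) (A \<union> B)) AB) = AB"
    using nc_matchings_subset disjoint by fastforce
  show "(\<lambda>M. (M \<inter> (?I \<times> ?I), M \<inter> (?O \<times> ?O))) ` {M\<in>nc_matchings S. (i, j) \<in> M}
      \<subseteq> nc_matchings ?I \<times> nc_matchings ?O"
    using nc_matching_restrict_at_arc by blast
  show "(\<lambda>(A, B). insert (i, j) (A \<union> B)) ` (nc_matchings ?I \<times> nc_matchings ?O)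
      \<subseteq> {M\<in>nc_matchings S. (i, j) \<in> M}"
    using nc_matching_insert_arc[OF assms] by auto
qed

lemma card_nc_matchings_through_arc:
  assumes "i \<in> S" "j \<in> S" "i < j"
  shows "card {M\<in>nc_matchings S. (i, j) \<in> M} =
    card (nc_matchings (points_between S i j)) * card (nc_matchings (points_outside S i j))"
  using bij_betw_same_card[OF bij_betw_nc_matchings_split_at_arc[OF assms]]
  by (simp add: card_cartesian_product)

lemma card_nc_matchings_by_partner_of_Min:
  assumes "finite S" "S \<noteq> {}"
  shows "card (nc_matchings S) = (\<Sum>j\<in>S - {Min S}. card {M\<in>nc_matchings S. (Min S, j) \<in> M})"
proof -
  let ?i = "Min S"
  have i: "?i \<in> S" "\<And>x. x \<in> S \<Longrightarrow> ?i \<le> x" using assms by auto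
  have union: "nc_matchings S = (\<Union>j\<in>S - {?i}. {M\<in>nc_matchings S. (?i, j) \<in> M})"
  proof (intro equalityI subsetI)
    fix M assume M: "M \<in> nc_matchings S"
    then have pm: "perfect_matching_on S M" unfolding nc_matchings_def by auto
    obtain a b where ab: "(a, b) \<in> M" "?i = a \<or> ?i = b"
      using perfect_matching_on_covers[OF pm i(1)] by auto
    with perfect_matching_on_arcD[OF pm ab(1)] i(2) have "a = ?i" "b \<in> S - {?i}" by force+
    with M ab show "M \<in> (\<Union>j\<in>S - {?i}. {M\<in>nc_matchings S. (?i, j) \<in> M})" by auto
  qed auto
  have disjoint: "{M\<in>nc_matchings S. (?i, j) \<in> M} \<inter> {M\<in>nc_matchings S. (?i, j') \<in> M} = {}"
    if "j \<noteq> j'" for j j'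
    using that perfect_matching_on_unique[OF _ i(1), of _ "(?i, j)" "(?i, j')"]
    unfolding nc_matchings_def by auto
  have "card (\<Union>j\<in>S - {?i}. {M\<in>nc_matchings S. (?i, j) \<in> M}) =
      (\<Sum>j\<in>S - {?i}. card {M\<in>nc_matchings S. (?i, j) \<in> M})"
    by (rule card_UN_disjoint) (auto simp: assms(1) finite_nc_matchings disjoint)
  with union show ?thesis by simp
qed

lemma sum_over_partners_of_Min:
  assumes "finite S" "S \<noteq> {}"
  shows "(\<Sum>j\<in>S - {Min S}. g (card (points_between S (Min S) j))) = (\<Sum>t<card S - 1. g t)"
proof -
  let ?i = "Min S" and ?h = "\<lambda>j. card (points_between S (Min S) j)"
  have i: "?i \<in> S" and gt: "\<And>j. j \<in> S - {?i} \<Longrightarrow> ?i < j"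
    using assms by (auto simp: order.strict_iff_order)
  have strict_mono: "?h j < ?h j'" if "j \<in> S - {?i}" "j < j'" for j j'
    using that gt[OF that(1)] assms(1)
    by (intro psubset_card_mono finite_points_between_outside)
       (auto simp: points_between_def)
  have inj: "inj_on ?h (S - {?i})"
    by (intro inj_onI) (metis less_irrefl linorder_neqE_nat strict_mono)
  have "?h ` (S - {?i}) \<subseteq> {..<card S - 1}"
    using card_points_between_outside[OF assms(1) i _ gt] by fastforce
  moreover have "card (?h ` (S - {?i})) = card {..<card S - 1}"
    using card_image[OF inj] i assms by (simp add: card_Diff_singleton)
  ultimately have "?h ` (S - {?i}) = {..<card S - 1}"
    by (intro card_subset_eq) auto
  then show ?thesis
    using sum.reindex[OF inj, of g] by simp
qed

fun nc_count :: "nat \<Rightarrow> nat" where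
  "nc_count 0 = 1"
| "nc_count (Suc 0) = 0"
| "nc_count (Suc (Suc k)) = (\<Sum>t\<le>k. nc_count t * nc_count (k - t))"

lemma card_nc_matchings: "finite S \<Longrightarrow> card (nc_matchings S) = nc_count (card S)"
proof (induction "card S" arbitrary: S rule: less_induct)
  case less
  show ?case
  proof (cases "S = {}")
    case True
    then show ?thesis by (simp add: nc_matchings_empty)
  next
    case False
    let ?i = "Min S"
    have i: "?i \<in> S" and gt: "\<And>j. j \<in> S - {?i} \<Longrightarrow> ?i < j"
      using False less.prems by (auto simp: order.strict_iff_order)
    have "card (nc_matchings S) = (\<Sum>j\<in>S - {?i}. card {M\<in>nc_matchings S. (?i, j) \<in> M})"
      by (rule card_nc_matchings_by_partner_of_Min[OF less.prems False])
    also have "\<dots> = (\<Sum>j\<in>S - {?i}.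
        nc_count (card (points_between S ?i j)) *
        nc_count (card S - 2 - card (points_between S ?i j)))"
    proof (rule sum.cong[OF refl])
      fix j assume j: "j \<in> S - {?i}"
      note sizes = card_points_between_outside[OF less.prems i _ gt[OF j]]
      have "card (nc_matchings (points_between S ?i j)) = nc_count (card (points_between S ?i j))"
        "card (nc_matchings (points_outside S ?i j)) = nc_count (card (points_outside S ?i j))"
        using j sizes less.hyps finite_points_between_outside[OF less.prems] by auto
      then show "card {M\<in>nc_matchings S. (?i, j) \<in> M} =
          nc_count (card (points_between S ?i j)) *
          nc_count (card S - 2 - card (points_between S ?i j))"
        using card_nc_matchings_through_arc[OF i _ gt[OF j]] j sizes by auto
    qed
    also have "\<dots> = (\<Sum>t<card S - 1. nc_count t * nc_count (card S - 2 - t))"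
      by (rule sum_over_partners_of_Min[OF less.prems False])
    also have "\<dots> = nc_count (card S)"
    proof -
      have "card S \<noteq> 0" using False less.prems by simp
      then consider "card S = 1" | k where "card S = Suc (Suc k)"
        by (metis One_nat_def not0_implies_Suc)
      then show ?thesis by cases (simp_all add: lessThan_Suc_atMost)
    qed
    finally show ?thesis .
  qed
qed

section \<open>Catalan numbers\<close>

definition sqrt_series_coeff :: "nat \<Rightarrow> real" where
  "sqrt_series_coeff n = ((1/2) gchoose n) * (-4) ^ n"

text \<open>Since \<open>sqrt (1 - 4x) = 1 - 2 \<Sum>s. catalan s * x ^ Suc s\<close>, squaring the series (Vandermonde's
  identity for \<open>1/2 + 1/2 = 1\<close>) gives Segner's recurrence.\<close>

definition catalan :: "nat \<Rightarrow> real" where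
  "catalan s = - sqrt_series_coeff (Suc s) / 2"

lemma sqrt_series_coeff_convolution:
  "(\<Sum>k\<le>n. sqrt_series_coeff k * sqrt_series_coeff (n - k)) = (1 gchoose n) * (-4) ^ n"
proof -
  have "(\<Sum>k\<le>n. sqrt_series_coeff k * sqrt_series_coeff (n - k)) =
      (\<Sum>k\<le>n. ((1/2) gchoose k) * ((1/2) gchoose (n - k))) * (-4) ^ n"
    unfolding sqrt_series_coeff_def sum_distrib_right
    by (intro sum.cong refl) (simp add: ac_simps flip: power_add)
  also have "\<dots> = (1 gchoose n) * (-4) ^ n"
    using gbinomial_Vandermonde[of "1/2 :: real" "1/2" n] by (simp add: atLeast0AtMost)
  finally show ?thesis .
qed

lemma sqrt_series_coeff_0 [simp]: "sqrt_series_coeff 0 = 1"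
  by (simp add: sqrt_series_coeff_def)

lemma sqrt_series_coeff_Suc: "sqrt_series_coeff (Suc s) = - 2 * catalan s"
  by (simp add: catalan_def)

lemma sqrt_series_coeff_Suc_ratio:
  "sqrt_series_coeff (Suc n) = sqrt_series_coeff n * (4 * real n - 2) / (real n + 1)"
proof -
  have "(1/2 :: real) * ((1/2) gchoose n) =
      of_nat n * ((1/2) gchoose n) + of_nat (Suc n) * ((1/2) gchoose (Suc n))"
    by (rule gbinomial_mult_1)
  then have "(1/2 :: real) gchoose Suc n = (1/2 - real n) * ((1/2) gchoose n) / (real n + 1)"
    by (simp add: field_simps)
  then have "sqrt_series_coeff (Suc n) =
      ((1/2 - real n) * ((1/2) gchoose n) / (real n + 1)) * ((-4) * (-4) ^ n)"
    unfolding sqrt_series_coeff_def by simp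
  also have "\<dots> = sqrt_series_coeff n * (4 * real n - 2) / (real n + 1)"
    unfolding sqrt_series_coeff_def by (simp add: field_simps)
  finally show ?thesis .
qed

lemma catalan_Suc_convolution: "catalan (Suc s) = (\<Sum>a\<le>s. catalan a * catalan (s - a))"
proof -
  let ?g = sqrt_series_coeff
  have "(1 :: real) gchoose Suc (Suc s) = 0"
    using binomial_gbinomial[of 1 "Suc (Suc s)", where 'a=real] by simp
  then have "0 = (\<Sum>k\<le>Suc (Suc s). ?g k * ?g (Suc (Suc s) - k))"
    by (simp add: sqrt_series_coeff_convolution)
  also have "\<dots> = ?g (Suc (Suc s)) + (\<Sum>k\<le>Suc s. ?g (Suc k) * ?g (Suc s - k))"
    by (subst sum.atMost_Suc_shift) simp
  also have "(\<Sum>k\<le>Suc s. ?g (Suc k) * ?g (Suc s - k)) =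
      (\<Sum>k\<le>s. ?g (Suc k) * ?g (Suc (s - k))) + ?g (Suc (Suc s))"
    by (subst sum.atMost_Suc) (simp add: Suc_diff_le)
  also have "(\<Sum>k\<le>s. ?g (Suc k) * ?g (Suc (s - k))) = 4 * (\<Sum>k\<le>s. catalan k * catalan (s - k))"
    by (simp add: sqrt_series_coeff_Suc sum_distrib_left)
  finally show ?thesis by (simp add: sqrt_series_coeff_Suc)
qed

lemma catalan_0 [simp]: "catalan 0 = 1"
  by (simp add: catalan_def sqrt_series_coeff_def)

lemma catalan_Suc: "catalan (Suc s) = catalan s * (4 * real s + 2) / (real s + 2)"
  using sqrt_series_coeff_Suc_ratio[of "Suc s"] by (simp add: sqrt_series_coeff_Suc field_simps)

lemma catalan_pos: "catalan s > 0"
  by (induction s) (auto simp: catalan_Suc)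

declare nc_count.simps(3) [simp del]

lemma nc_count_Suc_Suc: "nc_count (n + 2) = (\<Sum>t\<le>n. nc_count t * nc_count (n - t))"
  by (simp add: numeral_2_eq_2 nc_count.simps(3))

lemma nc_count_odd: "odd n \<Longrightarrow> nc_count n = 0"
proof (induction n rule: less_induct)
  case (less n)
  show ?case
  proof (cases "n = 1")
    case False
    with less.prems have m: "n = (n - 2) + 2" "odd (n - 2)" by presburger+
    have "nc_count t * nc_count (n - 2 - t) = 0" if "t \<le> n - 2" for t
    proof -
      have "odd t \<or> odd (n - 2 - t)" "t < n" "n - 2 - t < n" using that m by presburger+
      then show ?thesis using less.IH[of t] less.IH[of "n - 2 - t"]
        by (metis mult_zero_left mult_zero_right)
    qed
    then have "(\<Sum>t\<le>n - 2. nc_count t * nc_count (n - 2 - t)) = 0"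
      by (intro sum.neutral) auto
    then show ?thesis using nc_count_Suc_Suc[of "n - 2"] m(1) by simp
  qed simp
qed

lemma sum_atMost_double_even:
  fixes f :: "nat \<Rightarrow> 'a :: comm_monoid_add"
  assumes "\<And>t. odd t \<Longrightarrow> f t = 0"
  shows "(\<Sum>t\<le>2 * m. f t) = (\<Sum>a\<le>m. f (2 * a))"
proof -
  have "odd t" if "t \<in> {..2 * m} - (\<lambda>a. 2 * a) ` {..m}" for t
  proof (rule ccontr)
    assume "\<not> odd t"
    then obtain a where "t = 2 * a" by (auto elim: evenE)
    with that show False by auto
  qed
  then have "(\<Sum>t\<le>2 * m. f t) = (\<Sum>t\<in>(\<lambda>a. 2 * a) ` {..m}. f t)"
    using assms by (intro sum.mono_neutral_right) auto
  also have "\<dots> = (\<Sum>a\<le>m. f (2 * a))"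
    by (simp add: sum.reindex inj_on_def)
  finally show ?thesis .
qed

lemma nc_count_even: "real (nc_count (2 * k)) = catalan k"
proof (induction k rule: less_induct)
  case (less k)
  show ?case
  proof (cases k)
    case (Suc m)
    have "real (nc_count (2 * k)) = (\<Sum>t\<le>2 * m. real (nc_count t) * real (nc_count (2 * m - t)))"
      using nc_count_Suc_Suc[of "2 * m"] Suc by (simp add: mult_2)
    also have "\<dots> = (\<Sum>a\<le>m. real (nc_count (2 * a)) * real (nc_count (2 * (m - a))))"
      by (subst sum_atMost_double_even) (auto simp: nc_count_odd diff_mult_distrib2)
    also have "\<dots> = (\<Sum>a\<le>m. catalan a * catalan (m - a))"
      using less.IH Suc by (intro sum.cong) auto
    finally show ?thesis using catalan_Suc_convolution Suc by simp
  qed simp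
qed

section \<open>The probability that a matching contains a given arc\<close>

text \<open>\<open>central_binom_prob s = (2s choose s) / 4 ^ s\<close>.\<close>

definition central_binom_prob :: "nat \<Rightarrow> real" where
  "central_binom_prob s = (real s + 1) * catalan s / 4 ^ s"

lemma central_binom_prob_0 [simp]: "central_binom_prob 0 = 1"
  by (simp add: central_binom_prob_def)

lemma central_binom_prob_pos: "central_binom_prob s > 0"
  unfolding central_binom_prob_def using catalan_pos[of s] by simp

lemma catalan_eq_central_binom_prob: "catalan s = 4 ^ s * central_binom_prob s / (real s + 1)"
  unfolding central_binom_prob_def by (simp add: divide_simps, (simp add: algebra_simps)?)

lemma central_binom_prob_Suc:
  "central_binom_prob (Suc s) = central_binom_prob s * (2 * real s + 1) / (2 * real s + 2)"
proof -
  have "central_binom_prob (Suc s) =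
      (real s + 2) * (catalan s * (4 * real s + 2) / (real s + 2)) / (4 * 4 ^ s)"
    unfolding central_binom_prob_def catalan_Suc by (simp add: add.commute)
  also have "\<dots> = central_binom_prob s * (2 * real s + 1) / (2 * real s + 2)"
    unfolding central_binom_prob_def by (simp add: divide_simps) (simp add: algebra_simps)
  finally show ?thesis .
qed

lemma central_binom_prob_sq_le: "(2 * real s + 1) * (central_binom_prob s)\<^sup>2 \<le> 1"
proof (induction s)
  case (Suc s)
  let ?q = "(2 * real s + 3) * (2 * real s + 1) / (2 * real s + 2)\<^sup>2"
  have "(2 * real (Suc s) + 1) * (central_binom_prob (Suc s))\<^sup>2 =
      ?q * ((2 * real s + 1) * (central_binom_prob s)\<^sup>2)"
    unfolding central_binom_prob_Suc by (simp add: field_simps power2_eq_square)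
  also have "\<dots> \<le> ?q"
    using mult_left_mono[OF Suc, of ?q] by simp
  also have "\<dots> \<le> 1"
  proof -
    have "(2 * real s + 3) * (2 * real s + 1) \<le> (2 * real s + 2)\<^sup>2"
      by (simp add: algebra_simps power2_eq_square)
    then show ?thesis by (simp add: divide_le_eq_1)
  qed
  finally show ?case .
qed simp

lemma central_binom_prob_sq_ge: "1 \<le> (4 * real s + 1) * (central_binom_prob s)\<^sup>2"
proof (induction s)
  case (Suc s)
  let ?q = "(4 * real s + 5) * (2 * real s + 1)\<^sup>2 / ((4 * real s + 1) * (2 * real s + 2)\<^sup>2)"
  have "(4 * real s + 1) * (2 * real s + 2)\<^sup>2 \<le> (4 * real s + 5) * (2 * real s + 1)\<^sup>2"
    by (simp add: algebra_simps power2_eq_square)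
  then have "1 \<le> ?q"
    by (simp add: le_divide_eq_1)
  also have "\<dots> \<le> ?q * ((4 * real s + 1) * (central_binom_prob s)\<^sup>2)"
    using mult_left_mono[OF Suc, of ?q] by simp
  also have "\<dots> = (4 * real (Suc s) + 1) * (central_binom_prob (Suc s))\<^sup>2"
    unfolding central_binom_prob_Suc
    by (simp add: divide_simps power2_eq_square, (simp add: algebra_simps)?)
  finally show ?case .
qed simp

definition inv_pow_three_halves :: "nat \<Rightarrow> real" where
  "inv_pow_three_halves x = 1 / ((real x + 1) * sqrt (real x + 1))"

lemma inv_pow_three_halves_nonneg: "inv_pow_three_halves x \<ge> 0"
  unfolding inv_pow_three_halves_def by simp

lemma inv_pow_three_halves_antimono: "x \<le> y \<Longrightarrow> inv_pow_three_halves y \<le> inv_pow_three_halves x"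
  unfolding inv_pow_three_halves_def by (intro divide_left_mono mult_mono) auto

lemma inv_pow_three_halves_sq: "(inv_pow_three_halves x)\<^sup>2 = 1 / (real x + 1) ^ 3"
  unfolding inv_pow_three_halves_def
  by (simp add: power_mult_distrib power_divide power3_eq_cube power2_eq_square)

lemma catalan_ratio_rational_bound:
  fixes x y :: real
  assumes "0 \<le> x" "x \<le> y"
  shows "(x + y + 2)\<^sup>2 * (4 * x + 4 * y + 5) * (2 * x + 1)\<^sup>2 /
      (16 * (x + 1)\<^sup>2 * (y + 1)\<^sup>2 * (2 * y + 1)) \<le> 5"
proof -
  have "(x + y + 2)\<^sup>2 \<le> (2 * (y + 1))\<^sup>2" "(2 * x + 1)\<^sup>2 \<le> (2 * (x + 1))\<^sup>2"
    using assms by (intro power_mono; simp)+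
  moreover have "(2 * (y + 1))\<^sup>2 = 4 * (y + 1)\<^sup>2" "(2 * (x + 1))\<^sup>2 = 4 * (x + 1)\<^sup>2"
    by (simp_all add: power2_eq_square algebra_simps)
  ultimately have "(x + y + 2)\<^sup>2 \<le> 4 * (y + 1)\<^sup>2" "(2 * x + 1)\<^sup>2 \<le> 4 * (x + 1)\<^sup>2"
    by simp_all
  then have "(x + y + 2)\<^sup>2 / (4 * (y + 1)\<^sup>2) \<le> 1" "(2 * x + 1)\<^sup>2 / (4 * (x + 1)\<^sup>2) \<le> 1"
    using assms by (simp_all add: divide_le_eq_1)
  moreover have "(4 * x + 4 * y + 5) / (5 * (2 * y + 1)) \<le> 1"
    using assms by (simp add: divide_le_eq_1)
  ultimately have "((x + y + 2)\<^sup>2 / (4 * (y + 1)\<^sup>2)) * ((4 * x + 4 * y + 5) / (5 * (2 * y + 1))) *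
      ((2 * x + 1)\<^sup>2 / (4 * (x + 1)\<^sup>2)) \<le> 1 * 1 * 1"
    using assms by (intro mult_mono) auto
  moreover have "(x + y + 2)\<^sup>2 * (4 * x + 4 * y + 5) * (2 * x + 1)\<^sup>2 /
      (16 * (x + 1)\<^sup>2 * (y + 1)\<^sup>2 * (2 * y + 1)) = ((x + y + 2)\<^sup>2 / (4 * (y + 1)\<^sup>2)) *
      ((4 * x + 4 * y + 5) / (5 * (2 * y + 1))) * ((2 * x + 1)\<^sup>2 / (4 * (x + 1)\<^sup>2)) * 5"
    using assms by (simp add: divide_simps, (simp add: algebra_simps)?)
  ultimately show ?thesis by simp
qed

lemma ratio_sq_le_of_central_binom_bounds:
  fixes x y pa pb pm :: real
  assumes xy: "0 \<le> x" "x \<le> y" and pos: "pa > 0" "pb > 0" "pm > 0"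
    and "(2 * x + 1) * pa\<^sup>2 \<le> 1" "(2 * y + 1) * pb\<^sup>2 \<le> 1" "1 \<le> (4 * (x + y + 1) + 1) * pm\<^sup>2"
  shows "(pa * pb * (x + y + 2) / (4 * (x + 1) * (y + 1) * pm))\<^sup>2 \<le> 5 / (2 * x + 1) ^ 3"
proof -
  let ?R = "(x + y + 2)\<^sup>2 * (4 * x + 4 * y + 5) * (2 * x + 1)\<^sup>2 /
      (16 * (x + 1)\<^sup>2 * (y + 1)\<^sup>2 * (2 * y + 1))"
  have "1 / ((4 * (x + y + 1) + 1) * pm\<^sup>2) \<le> 1"
    using assms by (simp add: divide_le_eq_1)
  then have "((2 * x + 1) * pa\<^sup>2) * ((2 * y + 1) * pb\<^sup>2) * (1 / ((4 * (x + y + 1) + 1) * pm\<^sup>2)) * ?R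
      \<le> 1 * 1 * 1 * 5"
    using assms catalan_ratio_rational_bound[OF xy] by (intro mult_mono) auto
  moreover have "(pa * pb * (x + y + 2) / (4 * (x + 1) * (y + 1) * pm))\<^sup>2 * (2 * x + 1) ^ 3 =
      ((2 * x + 1) * pa\<^sup>2) * ((2 * y + 1) * pb\<^sup>2) * (1 / ((4 * (x + y + 1) + 1) * pm\<^sup>2)) * ?R"
    using xy pos
    by (simp add: divide_simps, (simp add: algebra_simps power2_eq_square power3_eq_cube)?)
  ultimately show ?thesis
    using xy by (simp add: pos_le_divide_eq)
qed

lemma catalan_ratio_le:
  assumes "a \<le> b"
  shows "catalan a * catalan b / catalan (a + b + 1) \<le> 3 * inv_pow_three_halves (2 * a)"
proof -
  let ?m = "a + b + 1"
  have "(4 :: real) ^ ?m = 4 * 4 ^ a * 4 ^ b" by (simp add: power_add)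
  then have ratio: "catalan a * catalan b / catalan ?m =
      central_binom_prob a * central_binom_prob b * (real a + real b + 2) /
      (4 * (real a + 1) * (real b + 1) * central_binom_prob ?m)"
    unfolding catalan_eq_central_binom_prob using central_binom_prob_pos[of ?m]
    by (simp add: divide_simps, (simp add: algebra_simps)?)
  have "(catalan a * catalan b / catalan ?m)\<^sup>2 \<le> 5 / (2 * real a + 1) ^ 3"
    unfolding ratio
    by (rule ratio_sq_le_of_central_binom_bounds)
       (use assms central_binom_prob_pos central_binom_prob_sq_le
         central_binom_prob_sq_ge[of ?m] in auto)
  also have "\<dots> \<le> (3 * inv_pow_three_halves (2 * a))\<^sup>2"
    unfolding power_mult_distrib inv_pow_three_halves_sq by (simp add: divide_simps)
  finally show ?thesis
    by (rule power2_le_imp_le) (simp add: inv_pow_three_halves_nonneg)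
qed

lemma nc_count_ratio_le:
  "real (nc_count x) * real (nc_count y) / real (nc_count (x + y + 2))
    \<le> 3 * (inv_pow_three_halves x + inv_pow_three_halves y)"
proof (cases "odd x \<or> odd y")
  case True
  then show ?thesis
    using nc_count_odd inv_pow_three_halves_nonneg[of x] inv_pow_three_halves_nonneg[of y] by auto
next
  case False
  then obtain a b where ab: "x = 2 * a" "y = 2 * b" by (auto elim!: evenE)
  then have "x + y + 2 = 2 * (a + b + 1)" by simp
  then have ratio: "real (nc_count x) * real (nc_count y) / real (nc_count (x + y + 2)) =
      catalan a * catalan b / catalan (a + b + 1)"
    by (simp only: ab nc_count_even)
  show ?thesis
  proof (cases "a \<le> b")
    case True
    then show ?thesis
      using catalan_ratio_le[OF True] inv_pow_three_halves_nonneg[of y] ratio ab by simp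
  next
    case False
    then have "catalan a * catalan b / catalan (a + b + 1) \<le> 3 * inv_pow_three_halves (2 * b)"
      using catalan_ratio_le[of b a] by (simp add: ac_simps)
    then show ?thesis
      using inv_pow_three_halves_nonneg[of x] ratio ab by simp
  qed
qed

section \<open>Averages over random subsets\<close>

lemma binomial_div_Suc:
  "real (m choose k) / (real k + 1) = real (Suc m choose Suc k) / (real m + 1)"
proof -
  have "real (Suc k) * real (Suc m choose Suc k) = real (Suc m) * real (m choose k)"
    using binomial_absorption[of k "Suc m"] by (simp only: diff_Suc_1 flip: of_nat_mult)
  then show ?thesis by (simp add: divide_simps, (simp add: algebra_simps)?)
qed

lemma sum_atMost_Suc_shift_le:
  fixes f :: "nat \<Rightarrow> 'a :: ordered_comm_monoid_add"
  assumes "\<And>k. 0 \<le> f k"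
  shows "(\<Sum>k\<le>m. f (Suc k)) \<le> (\<Sum>k\<le>Suc m. f k)"
  using assms[of 0] by (subst sum.atMost_Suc_shift) (simp add: add_increasing)

lemma sum_binomial_Suc_le: "(\<Sum>k\<le>m. real (Suc m choose Suc k)) \<le> 2 ^ Suc m"
proof -
  have "(\<Sum>k\<le>Suc m. real (Suc m choose k)) = 2 ^ Suc m"
    using choose_row_sum[of "Suc m"] by (metis of_nat_numeral of_nat_power of_nat_sum)
  with sum_atMost_Suc_shift_le[of "\<lambda>k. real (Suc m choose k)" m] show ?thesis by simp
qed

lemma sum_binomial_div_Suc_le: "(\<Sum>k\<le>m. real (m choose k) / (real k + 1)) \<le> 2 ^ Suc m / (real m + 1)"
proof -
  have "(\<Sum>k\<le>m. real (m choose k) / (real k + 1)) = (\<Sum>k\<le>m. real (Suc m choose Suc k)) / (real m + 1)"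
    by (simp only: binomial_div_Suc sum_divide_distrib)
  also have "\<dots> \<le> 2 ^ Suc m / (real m + 1)"
    by (intro divide_right_mono sum_binomial_Suc_le) simp
  finally show ?thesis .
qed

lemma sum_binomial_div_Suc_Suc_le:
  "(\<Sum>k\<le>m. real (m choose k) / ((real k + 1) * (real k + 2))) \<le>
    2 ^ Suc (Suc m) / ((real m + 1) * (real m + 2))"
proof -
  have "real (m choose k) / ((real k + 1) * (real k + 2)) =
      real (Suc (Suc m) choose Suc (Suc k)) / ((real m + 1) * (real m + 2))" for k
  proof -
    have "real (m choose k) / ((real k + 1) * (real k + 2)) =
        real (m choose k) / (real k + 1) / (real (Suc k) + 1)"
      by (simp add: add.assoc)
    also have "\<dots> = real (Suc m choose Suc k) / (real (Suc k) + 1) / (real m + 1)"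
      unfolding binomial_div_Suc[of m k] by (metis divide_divide_eq_left mult.commute)
    also have "\<dots> = real (Suc (Suc m) choose Suc (Suc k)) / (real (Suc m) + 1) / (real m + 1)"
      by (simp only: binomial_div_Suc[of "Suc m" "Suc k"])
    finally show ?thesis by (simp add: add.assoc mult.commute)
  qed
  then have "(\<Sum>k\<le>m. real (m choose k) / ((real k + 1) * (real k + 2))) =
      (\<Sum>k\<le>m. real (Suc (Suc m) choose Suc (Suc k))) / ((real m + 1) * (real m + 2))"
    by (simp only: sum_divide_distrib)
  also have "\<dots> \<le> 2 ^ Suc (Suc m) / ((real m + 1) * (real m + 2))"
    using sum_atMost_Suc_shift_le[of "\<lambda>k. real (Suc (Suc m) choose Suc k)" m]
      sum_binomial_Suc_le[of "Suc m"]
    by (intro divide_right_mono) simp_all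
  finally show ?thesis .
qed

lemma inv_pow_three_halves_le_amgm:
  fixes t :: real
  assumes "t > 0"
  shows "inv_pow_three_halves k \<le> (t / (real k + 1)\<^sup>2 + 1 / (t * (real k + 1))) / 2"
proof -
  define u where "u = real k + 1"
  have u: "u > 0" "sqrt u * sqrt u = u" unfolding u_def by simp_all
  have "2 * t * sqrt u \<le> t\<^sup>2 + u"
    using u sum_squares_bound[of t "sqrt u"] by (simp add: power2_eq_square algebra_simps)
  then have "2 * t * sqrt u / (2 * t * u\<^sup>2) \<le> (t\<^sup>2 + u) / (2 * t * u\<^sup>2)"
    using assms u by (intro divide_right_mono) auto
  moreover have "2 * t * sqrt u / (2 * t * u\<^sup>2) = 1 / (u * sqrt u)"
    using assms u by (simp add: divide_simps power2_eq_square, (simp add: algebra_simps)?)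
  moreover have "(t\<^sup>2 + u) / (2 * t * u\<^sup>2) = (t / u\<^sup>2 + 1 / (t * u)) / 2"
    using assms u by (simp add: divide_simps power2_eq_square, (simp add: algebra_simps)?)
  ultimately show ?thesis unfolding inv_pow_three_halves_def u_def[symmetric] by simp
qed

text \<open>For \<open>K\<close> binomially distributed with parameters \<open>m\<close> and \<open>1/2\<close>, the expectation of
  \<open>inv_pow_three_halves K\<close> is \<open>O(inv_pow_three_halves m)\<close>: AM-GM with \<open>t = sqrt (m + 1)\<close> reduces
  it to the expectations of \<open>1 / (K + 1)\<close> and \<open>1 / ((K + 1) (K + 2))\<close>, which absorption turns into
  binomial row sums.\<close>

lemma sum_binomial_inv_pow_three_halves_le:
  "(\<Sum>k\<le>m. real (m choose k) * inv_pow_three_halves k) \<le> 5 * 2 ^ m * inv_pow_three_halves m"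
proof -
  define t where "t = sqrt (real m + 1)"
  have t: "t > 0" "t * t = real m + 1" unfolding t_def by simp_all
  have sq_le: "real (m choose k) / (real k + 1)\<^sup>2 \<le>
      2 * (real (m choose k) / ((real k + 1) * (real k + 2)))" for k
    by (simp add: divide_simps power2_eq_square, (simp add: algebra_simps)?)
  have "(\<Sum>k\<le>m. real (m choose k) * inv_pow_three_halves k)
     \<le> (\<Sum>k\<le>m. real (m choose k) * ((t / (real k + 1)\<^sup>2 + 1 / (t * (real k + 1))) / 2))"
    by (intro sum_mono mult_left_mono inv_pow_three_halves_le_amgm t) auto
  also have "\<dots> = (\<Sum>k\<le>m. t / 2 * (real (m choose k) / (real k + 1)\<^sup>2) +
      1 / (2 * t) * (real (m choose k) / (real k + 1)))"
  proof (intro sum.cong refl)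
    fix k
    have "real k + 1 > 0" by simp
    then show "real (m choose k) * ((t / (real k + 1)\<^sup>2 + 1 / (t * (real k + 1))) / 2) =
        t / 2 * (real (m choose k) / (real k + 1)\<^sup>2) +
        1 / (2 * t) * (real (m choose k) / (real k + 1))"
      using t(1) by (simp add: divide_simps, (simp add: algebra_simps power2_eq_square)?)
  qed
  also have "\<dots> = t / 2 * (\<Sum>k\<le>m. real (m choose k) / (real k + 1)\<^sup>2) +
      1 / (2 * t) * (\<Sum>k\<le>m. real (m choose k) / (real k + 1))"
    by (simp only: sum.distrib sum_distrib_left)
  also have "\<dots> \<le> t / 2 * (2 * (2 ^ Suc (Suc m) / ((real m + 1) * (real m + 2)))) +
      1 / (2 * t) * (2 ^ Suc m / (real m + 1))"
  proof (intro add_mono mult_left_mono)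
    have "(\<Sum>k\<le>m. real (m choose k) / (real k + 1)\<^sup>2) \<le>
        (\<Sum>k\<le>m. 2 * (real (m choose k) / ((real k + 1) * (real k + 2))))"
      by (intro sum_mono sq_le)
    also have "\<dots> = 2 * (\<Sum>k\<le>m. real (m choose k) / ((real k + 1) * (real k + 2)))"
      by (simp only: sum_distrib_left)
    also have "\<dots> \<le> 2 * (2 ^ Suc (Suc m) / ((real m + 1) * (real m + 2)))"
      using sum_binomial_div_Suc_Suc_le[of m] by simp
    finally show "(\<Sum>k\<le>m. real (m choose k) / (real k + 1)\<^sup>2) \<le>
        2 * (2 ^ Suc (Suc m) / ((real m + 1) * (real m + 2)))" .
  qed (use t sum_binomial_div_Suc_le in auto)
  also have "\<dots> \<le> 4 * 2 ^ m * (t / (real m + 1)\<^sup>2) + 2 ^ m * inv_pow_three_halves m"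
    using t unfolding inv_pow_three_halves_def t_def[symmetric]
    by (intro add_mono; simp add: divide_simps power2_eq_square, (simp add: algebra_simps)?)
  also have "4 * 2 ^ m * (t / (real m + 1)\<^sup>2) = 4 * 2 ^ m * inv_pow_three_halves m"
    using t unfolding inv_pow_three_halves_def t_def[symmetric]
    by (simp add: divide_simps power2_eq_square, (simp add: algebra_simps)?)
  finally show ?thesis by (simp add: algebra_simps)
qed

lemma sum_Pow_card:
  assumes "finite X"
  shows "(\<Sum>T\<in>Pow X. f (card T)) = (\<Sum>k\<le>card X. of_nat (card X choose k) * f k)"
proof -
  have "(\<Sum>T\<in>Pow X. f (card T)) = (\<Sum>k\<le>card X. \<Sum>T\<in>{T. T \<in> Pow X \<and> card T = k}. f (card T))"
    by (rule sum.group[symmetric]) (use assms card_mono in auto)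
  also have "\<dots> = (\<Sum>k\<le>card X. of_nat (card X choose k) * f k)"
  proof (rule sum.cong[OF refl])
    fix k
    have "{T. T \<in> Pow X \<and> card T = k} = {T. T \<subseteq> X \<and> card T = k}" by auto
    then show "(\<Sum>T\<in>{T. T \<in> Pow X \<and> card T = k}. f (card T)) = of_nat (card X choose k) * f k"
      using n_subsets[OF assms, of k] by simp
  qed
  finally show ?thesis .
qed

lemma sum_Pow_card_inter:
  fixes f :: "nat \<Rightarrow> 'a :: comm_semiring_1"
  assumes "finite U" "X \<subseteq> U"
  shows "(\<Sum>R\<in>Pow U. f (card (R \<inter> X))) = 2 ^ card (U - X) * (\<Sum>T\<in>Pow X. f (card T))"
proof -
  have "(\<Sum>R\<in>Pow U. f (card (R \<inter> X))) = (\<Sum>(T, V)\<in>Pow X \<times> Pow (U - X). f (card T))"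
    by (rule sum.reindex_bij_witness[where i = "\<lambda>(T, V). T \<union> V" and j = "\<lambda>R. (R \<inter> X, R - X)"])
       (use assms(2) in auto)
  also have "\<dots> = (\<Sum>T\<in>Pow X. \<Sum>V\<in>Pow (U - X). f (card T))"
    by (rule sum.cartesian_product[symmetric])
  also have "\<dots> = (\<Sum>T\<in>Pow X. 2 ^ card (U - X) * f (card T))"
    using assms by (simp add: card_Pow)
  finally show ?thesis by (simp add: sum_distrib_left)
qed

lemma sum_Pow_inv_pow_three_halves_le:
  assumes "finite U" "X \<subseteq> U"
  shows "(\<Sum>R\<in>Pow U. inv_pow_three_halves (card (R \<inter> X))) \<le>
    5 * 2 ^ card U * inv_pow_three_halves (card X)"
proof -
  have X: "finite X" using assms finite_subset by auto
  have "(\<Sum>R\<in>Pow U. inv_pow_three_halves (card (R \<inter> X))) =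
      2 ^ card (U - X) * (\<Sum>k\<le>card X. real (card X choose k) * inv_pow_three_halves k)"
    unfolding sum_Pow_card_inter[OF assms] sum_Pow_card[OF X] ..
  also have "\<dots> \<le> 2 ^ card (U - X) * (5 * 2 ^ card X * inv_pow_three_halves (card X))"
    by (intro mult_left_mono sum_binomial_inv_pow_three_halves_le) auto
  also have "\<dots> = 5 * 2 ^ card U * inv_pow_three_halves (card X)"
    using assms X by (simp add: card_Diff_subset card_mono power_add[symmetric])
  finally show ?thesis .
qed

lemma sum_Pow_Diff: "(\<Sum>R\<in>Pow U. g (U - R)) = (\<Sum>R\<in>Pow U. g R)"
  by (rule sum.reindex_bij_witness[where i = "\<lambda>R. U - R" and j = "\<lambda>R. U - R"]) auto

section \<open>Summing over arcs of bounded length\<close>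

lemma inv_pow_three_halves_le_telescope:
  fixes x :: real assumes x: "x \<ge> 1"
  shows "1 / ((x+1) * sqrt (x+1)) \<le> 2 / sqrt x - 2 / sqrt (x+1)"
proof -
  define a where "a = sqrt x"
  define b where "b = sqrt (x+1)"
  have a: "a > 0" and b: "b > 0" and ab: "a \<le> b" using x unfolding a_def b_def by auto
  have aa: "a*a = x" and bb: "b*b = x+1" using x unfolding a_def b_def by auto
  have d: "(b - a) * (a + b) = 1" using aa bb by (simp add: algebra_simps)
  have "2 / a - 2 / b = 2 * (b - a) / (a * b)" using a b by (simp add: divide_simps)
  also have "\<dots> = 2 / (a * b * (a + b))"
    using a b d by (simp add: divide_simps, (simp add: algebra_simps)?)
  finally have e: "2 / a - 2 / b = 2 / (a * b * (a + b))" .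
  have "a * b * (a + b) \<le> b * b * (2 * b)" using a b ab by (intro mult_mono) auto
  hence "2 / (b * b * (2 * b)) \<le> 2 / (a * b * (a + b))" using a b by (intro divide_left_mono) auto
  moreover have "2 / (b * b * (2 * b)) = 1 / (b*b*b)" using b by simp
  ultimately have "1 / (b*b*b) \<le> 2 / (a * b * (a + b))" by simp
  moreover have "(x+1) * sqrt (x+1) = b*b*b" using bb unfolding b_def by simp
  ultimately have "1 / ((x+1) * sqrt (x+1)) \<le> 2 / a - 2 / b" using e by simp
  thus ?thesis unfolding a_def b_def .
qed

lemma sum_inv_pow_three_halves_interval_le:
  assumes "1 \<le> \<alpha>" "\<alpha> \<le> \<beta>"
  shows "(\<Sum>d\<in>{\<alpha>..\<beta>}. inv_pow_three_halves (d - 1)) \<le> 3 / sqrt (real \<alpha>) - 2 / sqrt (real \<beta>)"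
  using assms(2)
proof (induction \<beta> rule: dec_induct)
  case base
  have "inv_pow_three_halves (\<alpha> - 1) = 1 / (real \<alpha> * sqrt (real \<alpha>))"
    using assms unfolding inv_pow_three_halves_def by (simp add: of_nat_diff)
  also have "\<dots> \<le> 1 / sqrt (real \<alpha>)"
    using assms by (simp add: divide_simps)
  finally show ?case by simp
next
  case (step \<beta>)
  have "inv_pow_three_halves \<beta> \<le> 2 / sqrt (real \<beta>) - 2 / sqrt (real (Suc \<beta>))"
    using inv_pow_three_halves_le_telescope[of "real \<beta>"] step assms
    unfolding inv_pow_three_halves_def by (simp add: add.commute)
  then show ?case
    using step by (simp add: sum.cl_ivl_Suc)
qed

lemma inv_sqrt_le_telescope:
  fixes x :: real assumes x: "x \<ge> 0"
  shows "1 / sqrt (x+1) \<le> 2 * sqrt (x+1) - 2 * sqrt x"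
proof -
  define a where "a = sqrt x"
  define b where "b = sqrt (x+1)"
  have a: "a \<ge> 0" and b: "b > 0" and ab: "a \<le> b" using x unfolding a_def b_def by auto
  have aa: "a*a = x" and bb: "b*b = x+1" using x unfolding a_def b_def by auto
  have d: "(b - a) * (a + b) = 1" using aa bb by (simp add: algebra_simps)
  have "b - a = 1 / (a + b)" using d a b by (simp add: divide_simps algebra_simps)
  moreover have "1 / (a + b) \<ge> 1 / (2 * b)" using a b ab by (intro divide_left_mono) auto
  ultimately have "2 * (1 / (2 * b)) \<le> 2 * (b - a)" by simp
  moreover have "2 * (1 / (2 * b)) = 1 / b" using b by simp
  ultimately have "1 / b \<le> 2 * (b - a)" by simp
  thus ?thesis unfolding a_def b_def by (simp add: algebra_simps)
qed

lemma sum_inv_sqrt_le: "(\<Sum>e\<in>{1..N}. 1 / sqrt (real e)) \<le> 2 * sqrt (real N)"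
proof (induction N)
  case 0 then show ?case by simp
next
  case (Suc N)
  have "(\<Sum>e\<in>{1..Suc N}. 1 / sqrt (real e)) = (\<Sum>e\<in>{1..N}. 1 / sqrt (real e)) + 1 / sqrt (real N + 1)"
    by (simp add: add.commute)
  also have "1 / sqrt (real N + 1) \<le> 2 * sqrt (real N + 1) - 2 * sqrt (real N)"
    by (rule inv_sqrt_le_telescope) simp
  finally show ?case using Suc.IH by (simp add: add.commute)
qed

lemma times_inv_pow_three_halves_le:
  assumes "e \<ge> 1"
  shows "real e * inv_pow_three_halves (e - 2) \<le> 4 / sqrt (real e)"
proof (cases "e \<le> 2")
  case True
  then have "real e * sqrt (real e) \<le> 2 * 2"
    using real_sqrt_le_mono[of "real e" 4] by (intro mult_mono) auto
  then show ?thesis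
    using True assms by (simp add: inv_pow_three_halves_def divide_simps)
next
  case False
  define c where "c = real e - 1"
  have c: "c \<ge> 1" "real e = c + 1" unfolding c_def using False by auto
  have "sqrt (c + 1) \<le> sqrt (4 * c)" using c by (intro real_sqrt_le_mono) simp
  then have "sqrt (c + 1) \<le> 2 * sqrt c" by (simp add: real_sqrt_mult)
  then have "(c + 1) * sqrt (c + 1) \<le> (2 * c) * (2 * sqrt c)" using c by (intro mult_mono) auto
  then have "(c + 1) / (c * sqrt c) \<le> 4 / sqrt (c + 1)" using c
    by (simp add: divide_simps algebra_simps)
  moreover have "inv_pow_three_halves (e - 2) = 1 / (c * sqrt c)"
    unfolding inv_pow_three_halves_def c_def using False by (simp add: of_nat_diff)
  ultimately show ?thesis using c by simp
qed

definition gap_arcs :: "nat \<Rightarrow> nat \<Rightarrow> nat set \<Rightarrow> (nat \<times> nat) set" where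
  "gap_arcs \<alpha> \<beta> S = {(i, j) \<in> S \<times> S. i < j \<and> \<alpha> \<le> j - i \<and> j - i \<le> \<beta>}"

lemma finite_gap_arcs: "finite S \<Longrightarrow> finite (gap_arcs \<alpha> \<beta> S)"
  unfolding gap_arcs_def by (rule finite_subset[of _ "S \<times> S"]) auto

lemma gap_arcs_mono: "T \<subseteq> S \<Longrightarrow> gap_arcs \<alpha> \<beta> T \<subseteq> gap_arcs \<alpha> \<beta> S"
  unfolding gap_arcs_def by auto

lemma card_gap_arcs_with_gap:
  assumes "1 \<le> d" "\<alpha> \<le> d" "d \<le> \<beta>"
  shows "card {p \<in> gap_arcs \<alpha> \<beta> {1..2 * n}. snd p - fst p = d} = 2 * n - d"
proof -
  have "{p \<in> gap_arcs \<alpha> \<beta> {1..2 * n}. snd p - fst p = d} = (\<lambda>i. (i, i + d)) ` {1..2 * n - d}"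
    using assms unfolding gap_arcs_def by (auto simp: image_iff)
  moreover have "card ((\<lambda>i. (i, i + d)) ` {1..2 * n - d}) = 2 * n - d"
    by (subst card_image) (auto simp: inj_on_def)
  ultimately show ?thesis by simp
qed

lemma sum_gap_arcs_by_gap:
  assumes "1 \<le> \<alpha>"
  shows "(\<Sum>p\<in>gap_arcs \<alpha> \<beta> {1..2 * n}. h (snd p - fst p)) = (\<Sum>d\<in>{\<alpha>..\<beta>}. of_nat (2 * n - d) * h d)"
proof -
  have "(\<Sum>p\<in>gap_arcs \<alpha> \<beta> {1..2 * n}. h (snd p - fst p)) =
      (\<Sum>d\<in>{\<alpha>..\<beta>}. \<Sum>p\<in>{p \<in> gap_arcs \<alpha> \<beta> {1..2 * n}. snd p - fst p = d}. h (snd p - fst p))"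
    by (rule sum.group[symmetric], rule finite_gap_arcs, simp, simp, auto simp: gap_arcs_def)
  also have "\<dots> = (\<Sum>d\<in>{\<alpha>..\<beta>}. of_nat (2 * n - d) * h d)"
  proof (rule sum.cong[OF refl])
    fix d assume "d \<in> {\<alpha>..\<beta>}"
    then show "(\<Sum>p\<in>{p \<in> gap_arcs \<alpha> \<beta> {1..2 * n}. snd p - fst p = d}. h (snd p - fst p)) =
        of_nat (2 * n - d) * h d"
      using card_gap_arcs_with_gap[of d \<alpha> \<beta> n] assms by simp
  qed
  finally show ?thesis .
qed

lemma sum_outside_weight_le:
  assumes "\<beta> \<le> 2 * n"
  shows "(\<Sum>d\<in>{\<alpha>..\<beta>}. real (2 * n - d) * inv_pow_three_halves (2 * n - 2 - d)) \<le>
    8 * sqrt (2 * real n)"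
proof -
  have "(\<Sum>d\<in>{\<alpha>..\<beta>}. real (2 * n - d) * inv_pow_three_halves (2 * n - 2 - d)) \<le>
      (\<Sum>d\<in>{\<alpha>..\<beta>}. 4 / sqrt (real (2 * n - d)))"
  proof (rule sum_mono)
    fix d
    show "real (2 * n - d) * inv_pow_three_halves (2 * n - 2 - d) \<le> 4 / sqrt (real (2 * n - d))"
      using times_inv_pow_three_halves_le[of "2 * n - d"]
        by (cases "d < 2 * n") (simp_all add: diff_commute)
  qed
  also have "\<dots> \<le> (\<Sum>d\<le>2 * n. 4 / sqrt (real (2 * n - d)))"
    using assms by (intro sum_mono2) auto
  also have "\<dots> = (\<Sum>e\<le>2 * n. 4 / sqrt (real e))"
    by (rule sum.reindex_bij_witness[where i = "\<lambda>e. 2 * n - e" and j = "\<lambda>d. 2 * n - d"]) auto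
  also have "\<dots> = 4 * (\<Sum>e\<in>{1..2 * n}. 1 / sqrt (real e))"
    by (subst sum.mono_neutral_right[of "{..2 * n}" "{1..2 * n}"]) (auto simp: sum_distrib_left)
  also have "\<dots> \<le> 8 * sqrt (2 * real n)"
    using sum_inv_sqrt_le[of "2 * n"] by simp
  finally show ?thesis .
qed

lemma sum_gap_arcs_inv_pow_three_halves_le:
  assumes "1 \<le> \<alpha>" "\<alpha> \<le> \<beta>" "\<beta> \<le> 2 * n"
  shows "(\<Sum>p\<in>gap_arcs \<alpha> \<beta> {1..2 * n}. inv_pow_three_halves (snd p - fst p - 1) +
      inv_pow_three_halves (2 * n - 2 - (snd p - fst p))) \<le> 22 * real n / sqrt (real \<alpha>)"
proof -
  have sqrt_le: "sqrt (2 * real n) \<le> 2 * real n / sqrt (real \<alpha>)"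
  proof -
    have "sqrt (real \<alpha>) \<le> sqrt (2 * real n)" using assms by (intro real_sqrt_le_mono) simp
    then have "sqrt (2 * real n) * sqrt (real \<alpha>) \<le> 2 * real n"
      using mult_left_mono[of "sqrt (real \<alpha>)" "sqrt (2 * real n)" "sqrt (2 * real n)"] by simp
    then show ?thesis using assms by (simp add: divide_simps)
  qed
  have "(\<Sum>d\<in>{\<alpha>..\<beta>}. real (2 * n - d) * inv_pow_three_halves (d - 1)) \<le>
      (\<Sum>d\<in>{\<alpha>..\<beta>}. 2 * real n * inv_pow_three_halves (d - 1))"
    by (intro sum_mono mult_right_mono inv_pow_three_halves_nonneg) auto
  also have "\<dots> = 2 * real n * (\<Sum>d\<in>{\<alpha>..\<beta>}. inv_pow_three_halves (d - 1))"
    by (simp add: sum_distrib_left)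
  also have "\<dots> \<le> 2 * real n * (3 / sqrt (real \<alpha>))"
  proof (intro mult_left_mono)
    have "0 \<le> 2 / sqrt (real \<beta>)" by simp
    then show "(\<Sum>d\<in>{\<alpha>..\<beta>}. inv_pow_three_halves (d - 1)) \<le> 3 / sqrt (real \<alpha>)"
      using sum_inv_pow_three_halves_interval_le[OF assms(1,2)] by linarith
  qed simp
  finally have inside: "(\<Sum>d\<in>{\<alpha>..\<beta>}. real (2 * n - d) * inv_pow_three_halves (d - 1)) \<le>
      6 * real n / sqrt (real \<alpha>)" by simp
  have outside: "(\<Sum>d\<in>{\<alpha>..\<beta>}. real (2 * n - d) * inv_pow_three_halves (2 * n - 2 - d)) \<le>
      16 * real n / sqrt (real \<alpha>)"
    using sum_outside_weight_le[OF assms(3), of \<alpha>] mult_left_mono[OF sqrt_le, of 8] by simp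
  have "(\<Sum>p\<in>gap_arcs \<alpha> \<beta> {1..2 * n}. inv_pow_three_halves (snd p - fst p - 1) +
      inv_pow_three_halves (2 * n - 2 - (snd p - fst p))) =
      (\<Sum>d\<in>{\<alpha>..\<beta>}. real (2 * n - d) * inv_pow_three_halves (d - 1)) +
      (\<Sum>d\<in>{\<alpha>..\<beta>}. real (2 * n - d) * inv_pow_three_halves (2 * n - 2 - d))"
    using sum_gap_arcs_by_gap[OF assms(1), where n = n and \<beta> = \<beta>
        and h = "\<lambda>d. inv_pow_three_halves (d - 1) + inv_pow_three_halves (2 * n - 2 - d)"]
    by (simp only: distrib_left sum.distrib)
  also have "\<dots> \<le> 6 * real n / sqrt (real \<alpha>) + 16 * real n / sqrt (real \<alpha>)"
    using inside outside by (rule add_mono)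
  also have "\<dots> = 22 * real n / sqrt (real \<alpha>)"
    by (simp add: field_simps)
  finally show ?thesis .
qed

section \<open>The expectation in \<open>CP\<^sub>n\<close>\<close>

lemma A_count_eq_sum_gap_arcs:
  assumes "finite S" "M \<in> nc_matchings S"
  shows "A_count \<alpha> \<beta> M = (\<Sum>p\<in>gap_arcs \<alpha> \<beta> S. of_bool (p \<in> M))"
proof -
  have "{(i, j)\<in>M. \<alpha> \<le> j - i \<and> j - i \<le> \<beta>} = gap_arcs \<alpha> \<beta> S \<inter> M"
    using nc_matchings_subset[OF assms(2)] assms(2) perfect_matching_on_arcD
    unfolding gap_arcs_def nc_matchings_def by fastforce
  then show ?thesis
    unfolding A_count_def using finite_gap_arcs[OF assms(1)] by (simp add: Int_def)
qed

definition mean_A_count :: "nat \<Rightarrow> nat \<Rightarrow> nat set \<Rightarrow> real" where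
  "mean_A_count \<alpha> \<beta> S = (\<Sum>M\<in>nc_matchings S. A_count \<alpha> \<beta> M) / real (card (nc_matchings S))"

lemma mean_A_count_eq:
  assumes "finite S"
  shows "mean_A_count \<alpha> \<beta> S = (\<Sum>p\<in>gap_arcs \<alpha> \<beta> S.
    real (card {M\<in>nc_matchings S. p \<in> M}) / real (card (nc_matchings S)))"
proof -
  have "(\<Sum>M\<in>nc_matchings S. A_count \<alpha> \<beta> M) =
      (\<Sum>M\<in>nc_matchings S. \<Sum>p\<in>gap_arcs \<alpha> \<beta> S. of_bool (p \<in> M))"
    using A_count_eq_sum_gap_arcs[OF assms] by simp
  also have "\<dots> = (\<Sum>p\<in>gap_arcs \<alpha> \<beta> S. real (card {M\<in>nc_matchings S. p \<in> M}))"
    using finite_nc_matchings[OF assms] by (subst sum.swap) (simp add: Int_def)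
  finally show ?thesis
    unfolding mean_A_count_def by (simp add: sum_divide_distrib)
qed

lemma mean_A_count_le:
  assumes "finite S"
  shows "mean_A_count \<alpha> \<beta> S \<le> 3 * (\<Sum>p\<in>gap_arcs \<alpha> \<beta> S.
    inv_pow_three_halves (card (points_between S (fst p) (snd p))) +
    inv_pow_three_halves (card (points_outside S (fst p) (snd p))))"
proof -
  have "real (card {M\<in>nc_matchings S. (i, j) \<in> M}) / real (card (nc_matchings S)) \<le>
      3 * (inv_pow_three_halves (card (points_between S i j)) +
        inv_pow_three_halves (card (points_outside S i j)))"
    if "(i, j) \<in> gap_arcs \<alpha> \<beta> S" for i j
  proof -
    have ij: "i \<in> S" "j \<in> S" "i < j" using that unfolding gap_arcs_def by auto
    note finite = finite_points_between_outside[OF assms]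
    show ?thesis
      using nc_count_ratio_le[of "card (points_between S i j)" "card (points_outside S i j)"]
      by (simp add: card_nc_matchings_through_arc[OF ij] card_nc_matchings assms finite
          card_points_between_outside[OF assms ij])
  qed
  then show ?thesis
    unfolding mean_A_count_eq[OF assms] sum_distrib_left by (intro sum_mono) auto
qed

text \<open>Passing to a subset \<open>T \<subseteq> S\<close> only weakens the bound. Taking for \<open>T\<close> the red (blue) points
  among \<open>1..2n-1\<close> removes the parity correction at \<open>2n\<close>, so that averaging over the colouring
  becomes an average over all subsets of \<open>1..2n-1\<close>.\<close>

definition gap_arc_weight :: "nat \<Rightarrow> nat \<Rightarrow> nat \<Rightarrow> nat set \<Rightarrow> real" where
  "gap_arc_weight n \<alpha> \<beta> T = (\<Sum>p\<in>gap_arcs \<alpha> \<beta> {1..2 * n}.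
    inv_pow_three_halves (card (points_between T (fst p) (snd p))) +
    inv_pow_three_halves (card (points_outside T (fst p) (snd p))))"

lemma mean_A_count_le_gap_arc_weight:
  assumes "finite S" "S \<subseteq> {1..2 * n}" "T \<subseteq> S"
  shows "mean_A_count \<alpha> \<beta> S \<le> 3 * gap_arc_weight n \<alpha> \<beta> T"
proof -
  have "(\<Sum>p\<in>gap_arcs \<alpha> \<beta> S. inv_pow_three_halves (card (points_between S (fst p) (snd p))) +
        inv_pow_three_halves (card (points_outside S (fst p) (snd p))))
      \<le> (\<Sum>p\<in>gap_arcs \<alpha> \<beta> S. inv_pow_three_halves (card (points_between T (fst p) (snd p))) +
        inv_pow_three_halves (card (points_outside T (fst p) (snd p))))"
    using assms finite_points_between_outside[OF assms(1)] points_between_outside_mono[OF assms(3)]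
    by (intro sum_mono add_mono inv_pow_three_halves_antimono card_mono) auto
  also have "\<dots> \<le> gap_arc_weight n \<alpha> \<beta> T"
    unfolding gap_arc_weight_def using gap_arcs_mono[OF assms(2)]
    by (intro sum_mono2 finite_gap_arcs) (auto intro: add_nonneg_nonneg inv_pow_three_halves_nonneg)
  finally show ?thesis
    using mean_A_count_le[OF assms(1), of \<alpha> \<beta>] by linarith
qed

lemma card_points_between_interval:
  assumes "(i, j) \<in> gap_arcs \<alpha> \<beta> {1..2 * n}"
  shows "j - i - 1 \<le> card (points_between {1..2 * n - 1} i j)"
proof -
  have "{i<..<j} \<subseteq> points_between {1..2 * n - 1} i j"
    using assms unfolding gap_arcs_def points_between_def by auto
  then show ?thesis
    using card_mono[of "points_between {1..2 * n - 1} i j" "{i<..<j}"]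
    by (simp add: finite_points_between_outside)
qed

lemma card_points_outside_interval:
  assumes "(i, j) \<in> gap_arcs \<alpha> \<beta> {1..2 * n}"
  shows "2 * n - 2 - (j - i) \<le> card (points_outside {1..2 * n - 1} i j)"
proof -
  have ij: "1 \<le> i" "i < j" "j \<le> 2 * n" using assms unfolding gap_arcs_def by auto
  have "{1..<i} \<union> {j<..2 * n - 1} \<subseteq> points_outside {1..2 * n - 1} i j"
    using ij unfolding points_outside_def by auto
  then have "card ({1..<i} \<union> {j<..2 * n - 1}) \<le> card (points_outside {1..2 * n - 1} i j)"
    by (intro card_mono) (auto simp: finite_points_between_outside)
  moreover have "card ({1..<i} \<union> {j<..2 * n - 1}) = (i - 1) + (2 * n - 1 - j)"
    using ij by (subst card_Un_disjoint) auto
  ultimately show ?thesis using ij by linarith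
qed

lemma sum_Pow_points_between_weight_le:
  assumes "(i, j) \<in> gap_arcs \<alpha> \<beta> {1..2 * n}"
  shows "(\<Sum>R\<in>Pow {1..2 * n - 1}. inv_pow_three_halves (card (points_between R i j))) \<le>
    5 * 2 ^ card {1..2 * n - 1} * inv_pow_three_halves (j - i - 1)"
proof -
  let ?U = "{1..2 * n - 1}"
  define B where "B = points_between ?U i j"
  have "points_between R i j = R \<inter> B" if "R \<in> Pow ?U" for R
    using that unfolding B_def points_between_def by auto
  then have "(\<Sum>R\<in>Pow ?U. inv_pow_three_halves (card (points_between R i j))) =
      (\<Sum>R\<in>Pow ?U. inv_pow_three_halves (card (R \<inter> B)))"
    by simp
  also have "\<dots> \<le> 5 * 2 ^ card ?U * inv_pow_three_halves (card B)"
    by (rule sum_Pow_inv_pow_three_halves_le) (auto simp: B_def points_between_def)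
  also have "\<dots> \<le> 5 * 2 ^ card ?U * inv_pow_three_halves (j - i - 1)"
    unfolding B_def
   
      by (intro mult_left_mono inv_pow_three_halves_antimono card_points_between_interval[OF assms])
        simp
  finally show ?thesis .
qed

lemma sum_Pow_points_outside_weight_le:
  assumes "(i, j) \<in> gap_arcs \<alpha> \<beta> {1..2 * n}"
  shows "(\<Sum>R\<in>Pow {1..2 * n - 1}. inv_pow_three_halves (card (points_outside R i j))) \<le>
    5 * 2 ^ card {1..2 * n - 1} * inv_pow_three_halves (2 * n - 2 - (j - i))"
proof -
  let ?U = "{1..2 * n - 1}"
  define B where "B = points_outside ?U i j"
  have "points_outside R i j = R \<inter> B" if "R \<in> Pow ?U" for R
    using that unfolding B_def points_outside_def by auto
  then have "(\<Sum>R\<in>Pow ?U. inv_pow_three_halves (card (points_outside R i j))) =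
      (\<Sum>R\<in>Pow ?U. inv_pow_three_halves (card (R \<inter> B)))"
    by simp
  also have "\<dots> \<le> 5 * 2 ^ card ?U * inv_pow_three_halves (card B)"
    by (rule sum_Pow_inv_pow_three_halves_le) (auto simp: B_def points_outside_def)
  also have "\<dots> \<le> 5 * 2 ^ card ?U * inv_pow_three_halves (2 * n - 2 - (j - i))"
    unfolding B_def
   
      by (intro mult_left_mono inv_pow_three_halves_antimono card_points_outside_interval[OF assms])
        simp
  finally show ?thesis .
qed

lemma sum_Pow_gap_arc_weight_le:
  assumes "1 \<le> \<alpha>" "\<alpha> \<le> \<beta>" "\<beta> \<le> 2 * n"
  shows "(\<Sum>R\<in>Pow {1..2 * n - 1}. gap_arc_weight n \<alpha> \<beta> R) \<le>
    5 * 2 ^ card {1..2 * n - 1} * (22 * real n / sqrt (real \<alpha>))"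
proof -
  let ?U = "{1..2 * n - 1}" and ?K = "5 * 2 ^ card {1..2 * n - 1} :: real"
  let ?between = "\<lambda>p. \<Sum>R\<in>Pow ?U. inv_pow_three_halves (card (points_between R (fst p) (snd p)))"
  let ?outside = "\<lambda>p. \<Sum>R\<in>Pow ?U. inv_pow_three_halves (card (points_outside R (fst p) (snd p)))"
  have "(\<Sum>R\<in>Pow ?U. gap_arc_weight n \<alpha> \<beta> R) = (\<Sum>p\<in>gap_arcs \<alpha> \<beta> {1..2 * n}. ?between p + ?outside p)"
    unfolding gap_arc_weight_def by (subst sum.swap) (simp add: sum.distrib)
  also have "\<dots> \<le> (\<Sum>p\<in>gap_arcs \<alpha> \<beta> {1..2 * n}.
      ?K * (inv_pow_three_halves (snd p - fst p - 1) +
        inv_pow_three_halves (2 * n - 2 - (snd p - fst p))))"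
  proof (rule sum_mono)
    fix p assume "p \<in> gap_arcs \<alpha> \<beta> {1..2 * n}"
    then have p: "(fst p, snd p) \<in> gap_arcs \<alpha> \<beta> {1..2 * n}" by simp
    show "?between p + ?outside p \<le>
        ?K * (inv_pow_three_halves (snd p - fst p - 1) +
          inv_pow_three_halves (2 * n - 2 - (snd p - fst p)))"
      unfolding distrib_left
      using sum_Pow_points_between_weight_le[OF p] sum_Pow_points_outside_weight_le[OF p]
      by (rule add_mono)
  qed
  also have "\<dots> = ?K * (\<Sum>p\<in>gap_arcs \<alpha> \<beta> {1..2 * n}. inv_pow_three_halves (snd p - fst p - 1) +
      inv_pow_three_halves (2 * n - 2 - (snd p - fst p)))"
    by (simp only: sum_distrib_left)
  also have "\<dots> \<le> ?K * (22 * real n / sqrt (real \<alpha>))"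
    by (intro mult_left_mono sum_gap_arcs_inv_pow_three_halves_le[OF assms]) simp
  finally show ?thesis .
qed

lemma nc_matchings_nonempty:
  assumes "finite S" "even (card S)"
  shows "nc_matchings S \<noteq> {}"
proof -
  obtain k where "card S = 2 * k" using assms(2) by (auto elim!: evenE)
  then have "real (card (nc_matchings S)) = catalan k"
    using card_nc_matchings[OF assms(1)] nc_count_even by simp
  then show ?thesis using catalan_pos[of k] by auto
qed

lemma red_set_props:
  assumes "R0 \<subseteq> {1..2 * n - 1}"
  shows "finite (red_set n R0)" "red_set n R0 \<subseteq> {1..2 * n}" "even (card (red_set n R0))"
    "R0 \<subseteq> red_set n R0"
proof -
  have fin: "finite R0" using assms finite_subset by auto
  have R0: "R0 \<subseteq> {1..2 * n}" using assms by (auto simp: subset_iff)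
  show "finite (red_set n R0)" "R0 \<subseteq> red_set n R0"
    unfolding red_set_def using fin by auto
  have "n \<ge> 1" "2 * n \<notin> R0" if "odd (card R0)"
  proof -
    from that obtain x where "x \<in> R0" by (metis all_not_in_conv card.empty even_zero)
    with assms have "x \<in> {1..2 * n - 1}" by blast
    then show "n \<ge> 1" by simp linarith
    with assms show "2 * n \<notin> R0" by (auto simp: subset_iff)
  qed
  then show "red_set n R0 \<subseteq> {1..2 * n}" "even (card (red_set n R0))"
    using R0 fin unfolding red_set_def by auto
qed

lemma blue_set_props:
  assumes "R0 \<subseteq> {1..2 * n - 1}"
  shows "even (card ({1..2 * n} - red_set n R0))" "{1..2 * n - 1} - R0 \<subseteq> {1..2 * n} - red_set n R0"
proof -
  note red = red_set_props[OF assms]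
  have "card ({1..2 * n} - red_set n R0) = 2 * n - card (red_set n R0)"
    using red(1,2) by (simp add: card_Diff_subset)
  moreover have "card (red_set n R0) \<le> 2 * n"
    using card_mono[OF _ red(2)] by simp
  ultimately show "even (card ({1..2 * n} - red_set n R0))" using red(3) by auto
  show "{1..2 * n - 1} - R0 \<subseteq> {1..2 * n} - red_set n R0"
    unfolding red_set_def by auto
qed

lemma expectation_bind_pmf_of_set:
  fixes h :: "'b \<Rightarrow> real"
  assumes "finite A" "A \<noteq> {}" "\<And>a. a \<in> A \<Longrightarrow> finite (set_pmf (f a))"
  shows "measure_pmf.expectation (pmf_of_set A \<bind> f) h =
    (\<Sum>a\<in>A. measure_pmf.expectation (f a) h) / real (card A)"
proof -
  have "measure_pmf.expectation (pmf_of_set A \<bind> f) h =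
      (\<Sum>a\<in>A. measure_pmf.expectation (f a) h /\<^sub>R real (card A))"
    by (rule pmf_expectation_bind_pmf_of_set) (use assms in auto)
  then show ?thesis
    by (simp add: sum_distrib_left divide_inverse mult.commute)
qed

lemma A_count_Un:
  assumes "finite R" "finite B" "R \<inter> B = {}" "MR \<in> nc_matchings R" "MB \<in> nc_matchings B"
  shows "A_count \<alpha> \<beta> (MR \<union> MB) = A_count \<alpha> \<beta> MR + A_count \<alpha> \<beta> MB"
proof -
  let ?sel = "\<lambda>M. {(i, j)\<in>M. \<alpha> \<le> j - i \<and> j - i \<le> \<beta>}"
  have sub: "MR \<subseteq> R \<times> R" "MB \<subseteq> B \<times> B"
    using assms(4,5) by (simp_all add: nc_matchings_subset)
  then have "finite (?sel MR)" "finite (?sel MB)" "?sel MR \<inter> ?sel MB = {}"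
    using assms(1-3) by (auto intro: finite_subset[of _ "R \<times> R"] finite_subset[of _ "B \<times> B"])
  moreover have "?sel (MR \<union> MB) = ?sel MR \<union> ?sel MB" by auto
  ultimately show ?thesis
    unfolding A_count_def by (simp add: card_Un_disjoint)
qed

lemma expectation_A_count_union:
  assumes R: "finite R" "even (card R)" and B: "finite B" "even (card B)" and "R \<inter> B = {}"
  shows "measure_pmf.expectation (pmf_of_set (nc_matchings R) \<bind>
      (\<lambda>MR. pmf_of_set (nc_matchings B) \<bind> (\<lambda>MB. return_pmf (MR \<union> MB)))) (A_count \<alpha> \<beta>)
    = mean_A_count \<alpha> \<beta> R + mean_A_count \<alpha> \<beta> B"
proof -
  let ?NR = "nc_matchings R" and ?NB = "nc_matchings B"
  have NR: "finite ?NR" "?NR \<noteq> {}" and NB: "finite ?NB" "?NB \<noteq> {}"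
    using finite_nc_matchings nc_matchings_nonempty R B by auto
  have inner: "measure_pmf.expectation (pmf_of_set ?NB \<bind> (\<lambda>MB. return_pmf (MR \<union> MB))) (A_count \<alpha> \<beta>)
      = A_count \<alpha> \<beta> MR + mean_A_count \<alpha> \<beta> B" if "MR \<in> ?NR" for MR
  proof -
    have "measure_pmf.expectation (pmf_of_set ?NB \<bind> (\<lambda>MB. return_pmf (MR \<union> MB))) (A_count \<alpha> \<beta>)
        = (\<Sum>MB\<in>?NB. A_count \<alpha> \<beta> MR + A_count \<alpha> \<beta> MB) / real (card ?NB)"
      using NB A_count_Un[OF R(1) B(1) assms(5) that]
      by (simp add: expectation_bind_pmf_of_set)
    then show ?thesis
      using NB unfolding mean_A_count_def by (simp add: sum.distrib add_divide_distrib)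
  qed
  have "measure_pmf.expectation (pmf_of_set ?NR \<bind>
      (\<lambda>MR. pmf_of_set ?NB \<bind> (\<lambda>MB. return_pmf (MR \<union> MB)))) (A_count \<alpha> \<beta>)
      = (\<Sum>MR\<in>?NR. A_count \<alpha> \<beta> MR + mean_A_count \<alpha> \<beta> B) / real (card ?NR)"
    using NR NB inner by (simp add: expectation_bind_pmf_of_set set_bind_pmf)
  then show ?thesis
    using NR unfolding mean_A_count_def by (simp add: sum.distrib add_divide_distrib)
qed

lemma expectation_A_count_CP:
  "measure_pmf.expectation (CP n) (A_count \<alpha> \<beta>) =
    (\<Sum>R0\<in>Pow {1..2 * n - 1}. mean_A_count \<alpha> \<beta> (red_set n R0) +
      mean_A_count \<alpha> \<beta> ({1..2 * n} - red_set n R0)) / 2 ^ card {1..2 * n - 1}"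
proof -
  let ?U = "{1..2 * n - 1}"
  let ?f = "\<lambda>R0. pmf_of_set (nc_matchings (red_set n R0)) \<bind>
    (\<lambda>MR. pmf_of_set (nc_matchings ({1..2 * n} - red_set n R0)) \<bind> (\<lambda>MB. return_pmf (MR \<union> MB)))"
  have "finite (set_pmf (?f R0))" if "R0 \<in> Pow ?U" for R0
  proof -
    have "R0 \<subseteq> ?U" using that by simp
    note red = red_set_props[OF this] and blue = blue_set_props[OF this]
    have "finite (nc_matchings (red_set n R0))" "nc_matchings (red_set n R0) \<noteq> {}"
      "finite (nc_matchings ({1..2 * n} - red_set n R0))"
      "nc_matchings ({1..2 * n} - red_set n R0) \<noteq> {}"
      using red blue by (simp_all add: finite_nc_matchings nc_matchings_nonempty)
    then show ?thesis by (simp add: set_bind_pmf)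
  qed
  then have "measure_pmf.expectation (CP n) (A_count \<alpha> \<beta>) =
      (\<Sum>R0\<in>Pow ?U. measure_pmf.expectation (?f R0) (A_count \<alpha> \<beta>)) / real (card (Pow ?U))"
    unfolding CP_def Let_def by (intro expectation_bind_pmf_of_set) auto
  also have "\<dots> = (\<Sum>R0\<in>Pow ?U. mean_A_count \<alpha> \<beta> (red_set n R0) +
      mean_A_count \<alpha> \<beta> ({1..2 * n} - red_set n R0)) / 2 ^ card ?U"
  proof -
    have "measure_pmf.expectation (?f R0) (A_count \<alpha> \<beta>) =
        mean_A_count \<alpha> \<beta> (red_set n R0) + mean_A_count \<alpha> \<beta> ({1..2 * n} - red_set n R0)"
      if "R0 \<in> Pow ?U" for R0
      using red_set_props[of R0 n] blue_set_props[of R0 n] that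
      by (intro expectation_A_count_union) auto
    then show ?thesis by (simp add: card_Pow)
  qed
  finally show ?thesis .
qed

lemma expectation_A_count_CP_le:
  assumes "1 \<le> \<alpha>" "\<alpha> \<le> \<beta>" "\<beta> \<le> 2 * n"
  shows "measure_pmf.expectation (CP n) (A_count \<alpha> \<beta>) \<le> 660 * (real n / sqrt (real \<alpha>))"
proof -
  let ?U = "{1..2 * n - 1}"
  have "(\<Sum>R0\<in>Pow ?U. mean_A_count \<alpha> \<beta> (red_set n R0) + mean_A_count \<alpha> \<beta> ({1..2 * n} - red_set n R0))
      \<le> (\<Sum>R0\<in>Pow ?U. 3 * gap_arc_weight n \<alpha> \<beta> R0 + 3 * gap_arc_weight n \<alpha> \<beta> (?U - R0))"
  proof (intro sum_mono add_mono)
    fix R0 assume "R0 \<in> Pow ?U"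
    then have R0: "R0 \<subseteq> ?U" by simp
    show "mean_A_count \<alpha> \<beta> (red_set n R0) \<le> 3 * gap_arc_weight n \<alpha> \<beta> R0"
      using red_set_props[OF R0] by (intro mean_A_count_le_gap_arc_weight)
    show "mean_A_count \<alpha> \<beta> ({1..2 * n} - red_set n R0) \<le> 3 * gap_arc_weight n \<alpha> \<beta> (?U - R0)"
      using blue_set_props[OF R0] by (intro mean_A_count_le_gap_arc_weight) auto
  qed
  also have "\<dots> = 6 * (\<Sum>R0\<in>Pow ?U. gap_arc_weight n \<alpha> \<beta> R0)"
    using sum_Pow_Diff[of "gap_arc_weight n \<alpha> \<beta>" ?U]
    by (simp add: sum.distrib sum_distrib_left[symmetric])
  also have "\<dots> \<le> 6 * (5 * 2 ^ card ?U * (22 * real n / sqrt (real \<alpha>)))"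
    using sum_Pow_gap_arc_weight_le[OF assms] by simp
  finally show ?thesis
    unfolding expectation_A_count_CP by (simp add: divide_le_eq ac_simps)
qed

theorem lemma4p2:
  shows "(\<exists>C>0. \<forall>n \<alpha> \<beta>. 1 \<le> \<alpha> \<longrightarrow> \<alpha> \<le> \<beta> \<longrightarrow> \<beta> \<le> 2*n \<longrightarrow>
            measure_pmf.expectation (CP n) (A_count \<alpha> \<beta>)
              \<le> C * (real n / sqrt (real \<alpha>) + real \<beta> * real n * exp (- real \<alpha> / 16)))
       \<and> (\<exists>C>0. \<forall>n \<alpha> \<beta>. 1 \<le> \<alpha> \<longrightarrow> \<alpha> \<le> \<beta> \<longrightarrow> \<beta> \<le> 2*n \<longrightarrow>
            32 * ln (real n) \<le> real \<alpha> \<longrightarrow>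
            measure_pmf.expectation (CP n) (A_count \<alpha> \<beta>) \<le> C * (real n / sqrt (real \<alpha>)))"
proof (intro conjI exI[of _ "660 :: real"] allI impI)
  fix n \<alpha> \<beta> :: nat
  assume bounds: "1 \<le> \<alpha>" "\<alpha> \<le> \<beta>" "\<beta> \<le> 2 * n"
  then show "measure_pmf.expectation (CP n) (A_count \<alpha> \<beta>) \<le> 660 * (real n / sqrt (real \<alpha>))"
    by (rule expectation_A_count_CP_le)
  have "0 \<le> real \<beta> * real n * exp (- real \<alpha> / 16)" by simp
  with expectation_A_count_CP_le[OF bounds]
  show "measure_pmf.expectation (CP n) (A_count \<alpha> \<beta>)
      \<le> 660 * (real n / sqrt (real \<alpha>) + real \<beta> * real n * exp (- real \<alpha> / 16))"
    by (simp add: distrib_left add_increasing2)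
qed simp_all

end
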